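(* Let $\beta:\mathbb R\to\mathbb R$ be piecewise continuous with $\beta(-t)^2=\beta(t)^2$ for all $t$, and let $\Lambda(t)=\begin{pmatrix}0&1\\-\beta(t)^2&0\end{pmatrix}$. For $s\le t$ let $b(t,s)$ be the real $2\times2$ matrix solving $\frac{\partial}{\partial t}b(t,s)=\Lambda(t)b(t,s)$, $b(s,s)=\mathbb 1$, and set $b(t):=b(t,-t)$ for $t\ge0$. If for some $t\ge0$ one has $\mathrm{Tr}\,b(t)=2$, then $b(t)=\begin{pmatrix}1&0\\-a&1\end{pmatrix}$ for some $a\in\mathbb R$ or $b(t)=\begin{pmatrix}1&\tau\\0&1\end{pmatrix}$ for some $\tau\in\mathbb R$; if $\mathrm{Tr}\,b(t)=-2$, then $b(t)=-\begin{pmatrix}1&0\\-a&1\end{pmatrix}$ for some $a\in\mathbb R$ or $b(t)=-\begin{pmatrix}1&\tau\\0&1\end{pmatrix}$ for some $\tau\in\mathbb R$. *)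

theory Defs
  imports "HOL-Analysis.Analysis"
begin

definition piecewise_continuous :: "(real \<Rightarrow> real) \<Rightarrow> bool" where
  "piecewise_continuous f \<longleftrightarrow>
     (\<forall>a b. \<exists>S. finite S \<and> (\<forall>x\<in>{a..b} - S. isCont f x)) \<and>
     (\<forall>x. (\<exists>l. (f \<longlongrightarrow> l) (at_left x)) \<and> (\<exists>r. (f \<longlongrightarrow> r) (at_right x)))"

definition mat2 :: "real \<Rightarrow> real \<Rightarrow> real \<Rightarrow> real \<Rightarrow> real^2^2" where
  "mat2 p q r s = (\<chi> i j. if i = 1 then (if j = 1 then p else q) else (if j = 1 then r else s))"

definition Lam :: "(real \<Rightarrow> real) \<Rightarrow> real \<Rightarrow> real^2^2" where
  "Lam \<beta> t = mat2 0 1 (- ((\<beta> t)^2)) 0"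

text \<open>b is the propagator of d/dt b(t,s) = Lambda(t) b(t,s), b(s,s) = 1, for s \<le> t,
  understood (as usual for piecewise continuous coefficients) in the integral sense.\<close>
definition is_propagator :: "(real \<Rightarrow> real) \<Rightarrow> (real \<Rightarrow> real \<Rightarrow> real^2^2) \<Rightarrow> bool" where
  "is_propagator \<beta> b \<longleftrightarrow>
     (\<forall>s t. s \<le> t \<longrightarrow>
        (\<lambda>r. Lam \<beta> r ** b r s) integrable_on {s..t} \<and>
        b t s = mat 1 + integral {s..t} (\<lambda>r. Lam \<beta> r ** b r s))"

end

theory Submission
  imports Defs
begin

text \<open>Each column (u, v) of the propagator solves Hill's equation u' = v, v' = -q u with
  q = beta^2, away from the discontinuities of beta, so the Wronskian of the two columns,
  i.e. the determinant, stays 1. When q is even, r \<mapsto> (u(-r), -v(-r)) is again a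
  solution; the Wronskian of the first column with the reflected second column compares
  the value at t with the value at -t and yields b11(t) = b22(t). A unimodular matrix
  with equal diagonal entries and trace +2 or -2 has vanishing off-diagonal product,
  which gives the two shapes.\<close>

definition hill_solution ::
    "(real \<Rightarrow> real) \<Rightarrow> real \<Rightarrow> real \<Rightarrow> real set \<Rightarrow> (real \<Rightarrow> real) \<Rightarrow> (real \<Rightarrow> real) \<Rightarrow> bool" where
  "hill_solution q a b K u v \<longleftrightarrow>
     continuous_on {a..b} u \<and> continuous_on {a..b} v \<and>
     (\<forall>x \<in> {a<..<b} - K. (u has_real_derivative v x) (at x) \<and>
                          (v has_real_derivative - q x * u x) (at x))"

lemma DERIV_zero_off_finite_imp_constant:
  fixes f :: "real \<Rightarrow> real"
  assumes "finite K" "continuous_on {a..b} f"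
    and "\<And>x. x \<in> {a<..<b} - K \<Longrightarrow> (f has_real_derivative 0) (at x)"
    and "x \<in> {a..b}"
  shows "f x = f a"
proof -
  have "(f has_derivative (\<lambda>h. 0)) (at y within {a..b})"
    if "y \<in> {a..b} - (K \<union> {a, b})" for y
    using assms(3) that has_field_derivative_at_within[of f 0 y "{a..b}"]
    by (auto simp: has_field_derivative_def lambda_zero)
  then show ?thesis
    using has_derivative_zero_unique_strong_interval[of "K \<union> {a, b}"] assms(1,2,4) by blast
qed

lemma hill_wronskian_constant:
  assumes "finite K1" "finite K2"
    and sol1: "hill_solution q a b K1 u1 v1" and sol2: "hill_solution q a b K2 u2 v2"
    and "x \<in> {a..b}"
  shows "u1 x * v2 x - u2 x * v1 x = u1 a * v2 a - u2 a * v1 a"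
proof -
  define W where "W r = u1 r * v2 r - u2 r * v1 r" for r
  have "W x = W a"
  proof (rule DERIV_zero_off_finite_imp_constant[of "K1 \<union> K2" a b])
    show "continuous_on {a..b} W"
      using sol1 sol2 unfolding W_def hill_solution_def by (intro continuous_intros) auto
    fix y assume "y \<in> {a<..<b} - (K1 \<union> K2)"
    then have "(W has_real_derivative
        (v1 y * v2 y + (- q y * u2 y) * u1 y) - (v2 y * v1 y + (- q y * u1 y) * u2 y)) (at y)"
      using sol1 sol2 unfolding W_def[abs_def] hill_solution_def
      by (intro DERIV_diff DERIV_mult) auto
    then show "(W has_real_derivative 0) (at y)" by (simp add: algebra_simps)
  qed (use assms in auto)
  then show ?thesis unfolding W_def .
qed

lemma hill_solution_reflect:
  assumes even: "\<And>x. q (- x) = q x" and sol: "hill_solution q a b K u v"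
  shows "hill_solution q (- b) (- a) (uminus ` K) (\<lambda>r. u (- r)) (\<lambda>r. - v (- r))"
  unfolding hill_solution_def
proof (intro conjI ballI)
  have "continuous_on {- b..- a} (f \<circ> uminus)" if "continuous_on {a..b} f" for f :: "real \<Rightarrow> real"
    by (rule continuous_on_compose) (auto intro!: continuous_intros continuous_on_subset[OF that])
  then show "continuous_on {- b..- a} (\<lambda>r. u (- r))" "continuous_on {- b..- a} (\<lambda>r. - v (- r))"
    using sol unfolding hill_solution_def o_def by (auto intro: continuous_on_minus)
  fix x assume "x \<in> {- b<..<- a} - uminus ` K"
  then have "- x \<in> {a<..<b} - K" by (auto simp: image_iff)
  then have du: "(u has_real_derivative v (- x)) (at (- x))"
    and dv: "(v has_real_derivative - q (- x) * u (- x)) (at (- x))"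
    using sol unfolding hill_solution_def by auto
  have neg: "(uminus has_real_derivative - 1) (at x)"
    by (auto intro!: derivative_eq_intros)
  have "((\<lambda>r. u (- r)) has_real_derivative v (- x) * - 1) (at x)"
    using DERIV_chain2[where g=uminus, OF du neg] by simp
  then show "((\<lambda>r. u (- r)) has_real_derivative - v (- x)) (at x)" by simp
  have "((\<lambda>r. v (- r)) has_real_derivative - q (- x) * u (- x) * - 1) (at x)"
    using DERIV_chain2[where g=uminus, OF dv neg] by simp
  then show "((\<lambda>r. - v (- r)) has_real_derivative - q x * u (- x)) (at x)"
    using DERIV_minus by (fastforce simp: even)
qed

lemma integral_equation_has_real_derivative:
  fixes g :: "real \<Rightarrow> real"
  assumes "g integrable_on {a..c}" "\<And>r. r \<in> {a..c} \<Longrightarrow> p r = k + integral {a..r} g"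
    and x: "x \<in> {a<..<c}" and "isCont g x"
  shows "(p has_real_derivative g x) (at x)"
proof -
  have "((\<lambda>u. integral {a..u} g) has_vector_derivative g x) (at x within {a..c} - {})"
    by (rule integral_has_vector_derivative_continuous_at)
       (use assms in \<open>auto intro: continuous_at_imp_continuous_at_within\<close>)
  moreover have "x \<in> interior ({a..c} - {})" using x by simp
  ultimately have "((\<lambda>u. integral {a..u} g) has_real_derivative g x) (at x)"
    by (simp only: at_within_interior has_real_derivative_iff_has_vector_derivative)
  then have "((\<lambda>u. k + integral {a..u} g) has_real_derivative g x) (at x)"
    using DERIV_add[OF DERIV_const] by fastforce
  then show ?thesis
    by (rule has_field_derivative_transform_within_open[where S="{a<..<c}"])
       (use x assms(2) in auto)
qed

lemma Lam_mult_rows: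
  "(Lam \<beta> x ** M) $ 1 $ j = M $ 2 $ j"
  "(Lam \<beta> x ** M) $ 2 $ j = - (\<beta> x)\<^sup>2 * M $ 1 $ j"
  unfolding Lam_def mat2_def matrix_matrix_mult_def by (simp_all add: sum_2)

lemma propagator_initial:
  assumes "is_propagator \<beta> b"
  shows "b s s = mat 1"
  using assms unfolding is_propagator_def by auto

lemma propagator_entry_integral:
  assumes "is_propagator \<beta> b" and "s \<le> r"
  shows "(\<lambda>x. (Lam \<beta> x ** b x s) $ i $ j) integrable_on {s..r}"
    and "b r s $ i $ j = mat 1 $ i $ j + integral {s..r} (\<lambda>x. (Lam \<beta> x ** b x s) $ i $ j)"
proof -
  have entry: "bounded_linear (\<lambda>M :: real^2^2. M $ i $ j)"
    by (rule bounded_linear_compose[OF bounded_linear_vec_nth bounded_linear_vec_nth])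
  have int: "(\<lambda>x. Lam \<beta> x ** b x s) integrable_on {s..r}"
    and eq: "b r s = mat 1 + integral {s..r} (\<lambda>x. Lam \<beta> x ** b x s)"
    using assms unfolding is_propagator_def by auto
  show "(\<lambda>x. (Lam \<beta> x ** b x s) $ i $ j) integrable_on {s..r}"
    using integrable_linear[OF int entry] by (simp add: o_def)
  show "b r s $ i $ j = mat 1 $ i $ j + integral {s..r} (\<lambda>x. (Lam \<beta> x ** b x s) $ i $ j)"
    using integral_linear[OF int entry] eq by (simp add: o_def)
qed

lemma propagator_column_hill_solution:
  assumes propagator: "is_propagator \<beta> b" and "s \<le> c"
    and cont: "\<forall>x \<in> {s..c} - S. isCont \<beta> x"
  shows "hill_solution (\<lambda>x. (\<beta> x)\<^sup>2) s c S (\<lambda>r. b r s $ 1 $ j) (\<lambda>r. b r s $ 2 $ j)"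
proof -
  define G where "G i = (\<lambda>x. (Lam \<beta> x ** b x s) $ i $ j)" for i
  have int: "G i integrable_on {s..c}" for i
    using propagator_entry_integral(1)[OF propagator \<open>s \<le> c\<close>] by (simp add: G_def)
  have entry: "b r s $ i $ j = mat 1 $ i $ j + integral {s..r} (G i)" if "r \<in> {s..c}" for i r
    using propagator_entry_integral(2)[OF propagator, of s r] that by (simp add: G_def)
  have continuous: "continuous_on {s..c} (\<lambda>r. b r s $ i $ j)" for i
  proof -
    have "continuous_on {s..c} (\<lambda>r. mat 1 $ i $ j + integral {s..r} (G i))"
      using int by (intro continuous_intros indefinite_integral_continuous_1)
    then show ?thesis by (rule continuous_on_eq) (simp add: entry)
  qed
  have isCont_entry: "isCont (\<lambda>r. b r s $ i $ j) x" if "x \<in> {s<..<c}" for i x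
    using continuous_on_interior[OF continuous] that by auto
  have G1: "G 1 = (\<lambda>r. b r s $ 2 $ j)" and G2: "G 2 = (\<lambda>r. - (\<beta> r)\<^sup>2 * b r s $ 1 $ j)"
    by (simp_all add: G_def Lam_mult_rows fun_eq_iff)
  have deriv: "((\<lambda>r. b r s $ i $ j) has_real_derivative G i x) (at x)"
    if "x \<in> {s<..<c}" "isCont (G i) x" for i x
    using that int entry by (intro integral_equation_has_real_derivative[where a=s and c=c]) auto
  have "((\<lambda>r. b r s $ 1 $ j) has_real_derivative b x s $ 2 $ j) (at x)"
    and "((\<lambda>r. b r s $ 2 $ j) has_real_derivative - (\<beta> x)\<^sup>2 * b x s $ 1 $ j) (at x)"
    if x: "x \<in> {s<..<c} - S" for x
  proof -
    have "isCont \<beta> x" using x cont by auto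
    then have "isCont (G 2) x"
      unfolding G2 using isCont_entry[of x 1] x by (auto intro!: continuous_intros)
    then show "((\<lambda>r. b r s $ 2 $ j) has_real_derivative - (\<beta> x)\<^sup>2 * b x s $ 1 $ j) (at x)"
      using deriv[of x 2] x by (simp add: G2)
    show "((\<lambda>r. b r s $ 1 $ j) has_real_derivative b x s $ 2 $ j) (at x)"
      using deriv[of x 1] isCont_entry[of x 2] x by (simp add: G1)
  qed
  then show ?thesis
    unfolding hill_solution_def using continuous by auto
qed

lemma mat2_eta: "(M :: real^2^2) = mat2 (M$1$1) (M$1$2) (M$2$1) (M$2$2)"
  unfolding mat2_def by (simp add: vec_eq_iff forall_2)

lemma uminus_mat2: "- mat2 p q r s = mat2 (- p) (- q) (- r) (- s)"
  unfolding mat2_def by (simp add: vec_eq_iff forall_2)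

lemma trace_2: "trace (M :: real^2^2) = M$1$1 + M$2$2"
  unfolding trace_def by (simp add: sum_2)

lemma unimodular_equal_diagonal_trace_cases:
  fixes X :: "real^2^2"
  assumes det: "X$1$1 * X$2$2 - X$1$2 * X$2$1 = 1" and diag: "X$1$1 = X$2$2"
  shows "(trace X = 2 \<longrightarrow>
            (\<exists>a. X = mat2 1 0 (-a) 1) \<or> (\<exists>\<tau>. X = mat2 1 \<tau> 0 1)) \<and>
         (trace X = -2 \<longrightarrow>
            (\<exists>a. X = - mat2 1 0 (-a) 1) \<or> (\<exists>\<tau>. X = - mat2 1 \<tau> 0 1))"
proof (intro conjI impI)
  assume "trace X = 2"
  then have "X$1$1 = 1" "X$2$2 = 1" using diag by (auto simp: trace_2)
  moreover from this have "X$1$2 = 0 \<or> X$2$1 = 0" using det by simp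
  ultimately have "X = mat2 1 0 (- (- X$2$1)) 1 \<or> X = mat2 1 (X$1$2) 0 1"
    using mat2_eta[of X] by auto
  then show "(\<exists>a. X = mat2 1 0 (-a) 1) \<or> (\<exists>\<tau>. X = mat2 1 \<tau> 0 1)" by blast
next
  assume "trace X = -2"
  then have "X$1$1 = -1" "X$2$2 = -1" using diag by (auto simp: trace_2)
  moreover from this have "X$1$2 = 0 \<or> X$2$1 = 0" using det by simp
  ultimately have "X = - mat2 1 0 (- X$2$1) 1 \<or> X = - mat2 1 (- X$1$2) 0 1"
    using mat2_eta[of X] by (auto simp: uminus_mat2)
  then show "(\<exists>a. X = - mat2 1 0 (-a) 1) \<or> (\<exists>\<tau>. X = - mat2 1 \<tau> 0 1)" by blast
qed

theorem proposition4:
  fixes \<beta> :: "real \<Rightarrow> real" and b :: "real \<Rightarrow> real \<Rightarrow> real^2^2" and t :: real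
  assumes "piecewise_continuous \<beta>"
    and "\<forall>u. (\<beta> (-u))^2 = (\<beta> u)^2"
    and "is_propagator \<beta> b"
    and "t \<ge> 0"
  shows "(trace (b t (-t)) = 2 \<longrightarrow>
            (\<exists>a. b t (-t) = mat2 1 0 (-a) 1) \<or> (\<exists>\<tau>. b t (-t) = mat2 1 \<tau> 0 1)) \<and>
         (trace (b t (-t)) = -2 \<longrightarrow>
            (\<exists>a. b t (-t) = - mat2 1 0 (-a) 1) \<or> (\<exists>\<tau>. b t (-t) = - mat2 1 \<tau> 0 1))"
proof -
  define P where "P i j r = b r (-t) $ i $ j" for i j r
  obtain S where "finite S" and S: "\<forall>x \<in> {-t..t} - S. isCont \<beta> x"
    using assms(1) unfolding piecewise_continuous_def by blast
  have col: "hill_solution (\<lambda>x. (\<beta> x)\<^sup>2) (-t) t S (P 1 j) (P 2 j)" for j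
    unfolding P_def using propagator_column_hill_solution[OF assms(3) _ S] assms(4) by simp
  have reflected: "hill_solution (\<lambda>x. (\<beta> x)\<^sup>2) (-t) t (uminus ` S) (\<lambda>r. P 1 2 (-r)) (\<lambda>r. - P 2 2 (-r))"
    using hill_solution_reflect[OF _ col] assms(2) by simp
  have t: "t \<in> {-t..t}" using assms(4) by simp
  have start: "P 1 1 (-t) = 1" "P 2 2 (-t) = 1" "P 1 2 (-t) = 0" "P 2 1 (-t) = 0"
    unfolding P_def propagator_initial[OF assms(3)] by (simp_all add: mat_def)
  have "P 1 1 t * P 2 2 t - P 1 2 t * P 2 1 t = 1"
    using hill_wronskian_constant[OF \<open>finite S\<close> \<open>finite S\<close> col[of 1] col[of 2] t] start by simp
  moreover have "P 1 1 t = P 2 2 t"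
    using hill_wronskian_constant[OF \<open>finite S\<close> _ col[of 1] reflected t] \<open>finite S\<close> start by simp
  ultimately show ?thesis
    using unimodular_equal_diagonal_trace_cases unfolding P_def by blast
qed

end
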